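(* MWL is strictly more expressive than WL: every WL query is expressible in MWL, but the query "there are two paths of different lengths from a given node $s$ to a given node $t$" is expressible in MWL and not in WL.
   Context: Data graphs. Fix a finite alphabet $\Sigma$ and infinite data domains $\mathcal D_{\mathrm{id}}$ and $\mathcal D_{\mathrm{prop}}$. A data graph is $G=(V,E,\mathrm{id},\mathrm{dataof})$ with $V$ a finite nonempty set of nodes, $E\subseteq V\times\Sigma\times V$, $\mathrm{id}:V\to\mathcal D_{\mathrm{id}}$ injective and $\mathrm{dataof}:V\to\mathcal D_{\mathrm{prop}}$. A path is a sequence $\rho=v_0a_1v_1\cdots a_nv_n$ ($n\ge 0$) with $(v_{i-1},a_i,v_i)\in E$ for all $i$; its length is $n$, its positions are $0,\dots,n$. WL (walk logic). Path variables $\pi,\omega,\dots$ range over paths; each position variable $\ell^\pi$ has a sort $\pi$ and ranges over positions of the path assigned to $\pi$. Atoms: $E_a(\ell^\pi,m^\pi)$ ($m=\ell+1$ and the $m$-th label of the path is $a$); $\ell^\pi<m^\pi$ (same sort only); $\ell^\pi\equiv_{\mathrm{id}} n^\omega$ (the nodes at these positions are equal); $\ell^\pi\equiv_{\mathrm{data}} n^\omega$ (these nodes have equal $\mathrm{dataof}$). Closed under $\neg,\vee,\exists\ell^\pi,\exists\pi$. MWL (multi-path walk logic) is WL extended with atoms $\ell^\pi<n^\omega$ for arbitrary (possibly different) sorts $\pi,\omega$, true iff the position assigned to $\ell^\pi$ is smaller, as an integer, than the position assigned to $n^\omega$. The nodes $s,t$ are given as single-node paths (free path variables constrained to have length $0$).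 *)

theory Defs
  imports Main "HOL-Library.Infinite_Typeclass"
begin

(* Data graphs. Nodes are natural numbers (any finite graph is isomorphic to one
   of these); 'a is the finite alphabet Sigma, 'i = D_id, 'd = D_prop. *)
record ('a, 'i, 'd) dgraph =
  nodes :: "nat set"
  edges :: "(nat \<times> 'a \<times> nat) set"
  idof  :: "nat \<Rightarrow> 'i"
  dataof :: "nat \<Rightarrow> 'd"

definition is_dgraph :: "('a, 'i, 'd) dgraph \<Rightarrow> bool" where
  "is_dgraph G \<longleftrightarrow> finite (nodes G) \<and> nodes G \<noteq> {}
     \<and> edges G \<subseteq> nodes G \<times> UNIV \<times> nodes G \<and> inj_on (idof G) (nodes G)"

(* A path v0 a1 v1 ... an vn is represented as ([v0,...,vn], [a1,...,an]). *)
type_synonym 'a path = "nat list \<times> 'a list"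

definition plen :: "'a path \<Rightarrow> nat" where "plen \<rho> = length (snd \<rho>)"
definition pnode :: "'a path \<Rightarrow> nat \<Rightarrow> nat" where "pnode \<rho> i = fst \<rho> ! i"
(* the i-th label a_i, for 1 <= i <= length *)
definition plabel :: "'a path \<Rightarrow> nat \<Rightarrow> 'a" where "plabel \<rho> i = snd \<rho> ! (i - 1)"

definition is_path :: "('a, 'i, 'd) dgraph \<Rightarrow> 'a path \<Rightarrow> bool" where
  "is_path G \<rho> \<longleftrightarrow> length (fst \<rho>) = Suc (length (snd \<rho>)) \<and> pnode \<rho> 0 \<in> nodes G
     \<and> (\<forall>i. 1 \<le> i \<and> i \<le> plen \<rho> \<longrightarrow> (pnode \<rho> (i - 1), plabel \<rho> i, pnode \<rho> i) \<in> edges G)"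

(* Path variables are natural numbers; a position variable l^pi is a pair (l, pi),
   its sort being the second component. *)
type_synonym pathvar = nat
type_synonym posvar = "nat \<times> pathvar"

datatype 'a fm =
    Edge 'a posvar posvar
  | Less posvar posvar
  | EqId posvar posvar
  | EqData posvar posvar
  | Neg "'a fm"
  | Disj "'a fm" "'a fm"
  | ExPos posvar "'a fm"
  | ExPath pathvar "'a fm"

fun fpv :: "'a fm \<Rightarrow> posvar set" where
  "fpv (Edge a x y) = {x, y}"
| "fpv (Less x y) = {x, y}"
| "fpv (EqId x y) = {x, y}"
| "fpv (EqData x y) = {x, y}"
| "fpv (Neg \<phi>) = fpv \<phi>"
| "fpv (Disj \<phi> \<psi>) = fpv \<phi> \<union> fpv \<psi>"
| "fpv (ExPos x \<phi>) = fpv \<phi> - {x}"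
| "fpv (ExPath p \<phi>) = fpv \<phi>"

fun fpathv :: "'a fm \<Rightarrow> pathvar set" where
  "fpathv (Edge a x y) = {snd x, snd y}"
| "fpathv (Less x y) = {snd x, snd y}"
| "fpathv (EqId x y) = {snd x, snd y}"
| "fpathv (EqData x y) = {snd x, snd y}"
| "fpathv (Neg \<phi>) = fpathv \<phi>"
| "fpathv (Disj \<phi> \<psi>) = fpathv \<phi> \<union> fpathv \<psi>"
| "fpathv (ExPos x \<phi>) = {snd x} \<union> fpathv \<phi>"
| "fpathv (ExPath p \<phi>) = fpathv \<phi> - {p}"

fun wf_MWL :: "'a fm \<Rightarrow> bool" where
  "wf_MWL (Edge a x y) = (snd x = snd y)"
| "wf_MWL (Less x y) = True"
| "wf_MWL (EqId x y) = True"
| "wf_MWL (EqData x y) = True"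
| "wf_MWL (Neg \<phi>) = wf_MWL \<phi>"
| "wf_MWL (Disj \<phi> \<psi>) = (wf_MWL \<phi> \<and> wf_MWL \<psi>)"
| "wf_MWL (ExPos x \<phi>) = wf_MWL \<phi>"
| "wf_MWL (ExPath p \<phi>) = (wf_MWL \<phi> \<and> (\<forall>x\<in>fpv \<phi>. snd x \<noteq> p))"

fun wf_WL :: "'a fm \<Rightarrow> bool" where
  "wf_WL (Edge a x y) = (snd x = snd y)"
| "wf_WL (Less x y) = (snd x = snd y)"
| "wf_WL (EqId x y) = True"
| "wf_WL (EqData x y) = True"
| "wf_WL (Neg \<phi>) = wf_WL \<phi>"
| "wf_WL (Disj \<phi> \<psi>) = (wf_WL \<phi> \<and> wf_WL \<psi>)"
| "wf_WL (ExPos x \<phi>) = wf_WL \<phi>"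
| "wf_WL (ExPath p \<phi>) = (wf_WL \<phi> \<and> (\<forall>x\<in>fpv \<phi>. snd x \<noteq> p))"

fun sat :: "('a, 'i, 'd) dgraph \<Rightarrow> (pathvar \<Rightarrow> 'a path) \<Rightarrow> (posvar \<Rightarrow> nat) \<Rightarrow> 'a fm \<Rightarrow> bool" where
  "sat G P L (Edge a x y) = (L y = L x + 1 \<and> L y \<le> plen (P (snd y)) \<and> plabel (P (snd y)) (L y) = a)"
| "sat G P L (Less x y) = (L x < L y)"
| "sat G P L (EqId x y) = (idof G (pnode (P (snd x)) (L x)) = idof G (pnode (P (snd y)) (L y)))"
| "sat G P L (EqData x y) = (dataof G (pnode (P (snd x)) (L x)) = dataof G (pnode (P (snd y)) (L y)))"
| "sat G P L (Neg \<phi>) = (\<not> sat G P L \<phi>)"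
| "sat G P L (Disj \<phi> \<psi>) = (sat G P L \<phi> \<or> sat G P L \<psi>)"
| "sat G P L (ExPos x \<phi>) = (\<exists>i \<le> plen (P (snd x)). sat G P (L(x := i)) \<phi>)"
| "sat G P L (ExPath p \<phi>) = (\<exists>\<rho>. is_path G \<rho> \<and> sat G (P(p := \<rho>)) L \<phi>)"

type_synonym ('a, 'i, 'd) query = "('a, 'i, 'd) dgraph \<Rightarrow> nat \<Rightarrow> nat \<Rightarrow> bool"

(* s and t are the path variables 0 and 1, assigned single-node paths. *)
definition var_s :: pathvar where "var_s = 0"
definition var_t :: pathvar where "var_t = 1"

definition single :: "nat \<Rightarrow> 'a path" where "single v = ([v], [])"

definition st_assign :: "nat \<Rightarrow> nat \<Rightarrow> pathvar \<Rightarrow> 'a path" where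
  "st_assign u v = (\<lambda>p. if p = var_s then single u else if p = var_t then single v else single u)"

definition expresses :: "'a fm \<Rightarrow> ('a, 'i, 'd) query \<Rightarrow> bool" where
  "expresses \<phi> Q \<longleftrightarrow> fpv \<phi> = {} \<and> fpathv \<phi> \<subseteq> {var_s, var_t} \<and>
     (\<forall>(G :: ('a, 'i, 'd) dgraph) u v. is_dgraph G \<longrightarrow> u \<in> nodes G \<longrightarrow> v \<in> nodes G \<longrightarrow>
        (sat G (st_assign u v) (\<lambda>_. 0) \<phi> \<longleftrightarrow> Q G u v))"

definition WL_expressible :: "('a, 'i, 'd) query \<Rightarrow> bool" where
  "WL_expressible Q \<longleftrightarrow> (\<exists>\<phi>. wf_WL \<phi> \<and> expresses \<phi> Q)"

definition MWL_expressible :: "('a, 'i, 'd) query \<Rightarrow> bool" where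
  "MWL_expressible Q \<longleftrightarrow> (\<exists>\<phi>. wf_MWL \<phi> \<and> expresses \<phi> Q)"

definition diff_len_query :: "('a, 'i, 'd) query" where
  "diff_len_query G u v \<longleftrightarrow> (\<exists>\<rho> \<rho>'. is_path G \<rho> \<and> is_path G \<rho>' \<and>
      pnode \<rho> 0 = u \<and> pnode \<rho> (plen \<rho>) = v \<and> pnode \<rho>' 0 = u \<and> pnode \<rho>' (plen \<rho>') = v \<and>
      plen \<rho> \<noteq> plen \<rho>')"

end

theory Submission
  imports Defs
begin

text \<open>Every WL formula is an MWL formula, and two paths from s to t differ in length iff the
  last position of one is smaller than the last position of the other, a comparison of positions
  of different sorts and hence expressible in MWL.

  For the converse, let \<open>r\<close> be the quantifier rank of a WL formula and \<open>N = 2^(r+1)\<close>, and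
  compare the theta graphs whose two s-t branches have lengths \<open>N, N + 1\<close> (the query holds) and
  \<open>N, N\<close> (it fails). Every path runs up a single branch, so positions are heights on branches;
  since WL only compares positions of the same path, this is an Ehrenfeucht-Fraisse game on
  linear orders: Duplicator keeps, on each branch, the marked heights of both graphs ordered alike
  with equal gaps up to a threshold that halves with every round.\<close>

lemma wf_WL_imp_wf_MWL: "wf_WL \<phi> \<Longrightarrow> wf_MWL \<phi>"
  by (induction \<phi>) auto

definition Conj :: "'a fm \<Rightarrow> 'a fm \<Rightarrow> 'a fm" where
  "Conj \<phi> \<psi> = Neg (Disj (Neg \<phi>) (Neg \<psi>))"

definition IsFirst :: "posvar \<Rightarrow> 'a fm" where
  "IsFirst x = Neg (ExPos (Suc (fst x), snd x) (Less (Suc (fst x), snd x) x))"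

definition IsLast :: "posvar \<Rightarrow> 'a fm" where
  "IsLast x = Neg (ExPos (Suc (fst x), snd x) (Less x (Suc (fst x), snd x)))"

lemma sat_Conj [simp]: "sat G P L (Conj \<phi> \<psi>) \<longleftrightarrow> sat G P L \<phi> \<and> sat G P L \<psi>"
  by (simp add: Conj_def)

lemma sat_IsFirst [simp]: "sat G P L (IsFirst x) \<longleftrightarrow> L x = 0"
  by (auto simp: IsFirst_def prod_eq_iff)

lemma sat_IsLast [simp]: "sat G P L (IsLast x) \<longleftrightarrow> plen (P (snd x)) \<le> L x"
  by (auto simp: IsLast_def prod_eq_iff not_less)

definition ExFirst :: "posvar \<Rightarrow> 'a fm \<Rightarrow> 'a fm" where
  "ExFirst x \<phi> = ExPos x (Conj (IsFirst x) \<phi>)"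

definition ExLast :: "posvar \<Rightarrow> 'a fm \<Rightarrow> 'a fm" where
  "ExLast x \<phi> = ExPos x (Conj (IsLast x) \<phi>)"

lemma sat_ExFirst [simp]: "sat G P L (ExFirst x \<phi>) \<longleftrightarrow> sat G P (L(x := 0)) \<phi>"
  by (auto simp: ExFirst_def)

lemma sat_ExLast [simp]: "sat G P L (ExLast x \<phi>) \<longleftrightarrow> sat G P (L(x := plen (P (snd x)))) \<phi>"
  by (auto simp: ExLast_def intro: antisym)

text \<open>The comparison of the last positions of paths 2 and 3 is the only atom outside WL.\<close>
definition diff_len_fm :: "'a fm" where
  "diff_len_fm = ExPos (0, var_s) (ExPos (0, var_t) (ExPath 2 (ExPath 3
     (ExFirst (0, 2) (ExLast (1, 2) (ExFirst (0, 3) (ExLast (1, 3)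
       (Conj (Conj (Conj (EqId (0, 2) (0, var_s)) (EqId (1, 2) (0, var_t)))
                   (Conj (EqId (0, 3) (0, var_s)) (EqId (1, 3) (0, var_t))))
             (Less (1, 2) (1, 3))))))))))"

lemma wf_MWL_diff_len_fm: "wf_MWL diff_len_fm"
  by (simp add: diff_len_fm_def Conj_def ExFirst_def ExLast_def IsFirst_def IsLast_def
      var_s_def var_t_def insert_Diff_if)

lemma diff_len_fm_closed: "fpv diff_len_fm = {}" "fpathv diff_len_fm \<subseteq> {var_s, var_t}"
  by (auto simp: diff_len_fm_def Conj_def ExFirst_def ExLast_def IsFirst_def IsLast_def
      var_s_def var_t_def)

lemma sat_diff_len_fm_iff:
  "sat G (st_assign u v) (\<lambda>_. 0) diff_len_fm \<longleftrightarrow>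
     (\<exists>\<rho> \<omega>. is_path G \<rho> \<and> is_path G \<omega> \<and>
        idof G (pnode \<rho> 0) = idof G u \<and> idof G (pnode \<rho> (plen \<rho>)) = idof G v \<and>
        idof G (pnode \<omega> 0) = idof G u \<and> idof G (pnode \<omega> (plen \<omega>)) = idof G v \<and>
        plen \<rho> < plen \<omega>)"
  by (simp add: diff_len_fm_def st_assign_def var_s_def var_t_def single_def plen_def pnode_def)

lemma path_node_in_nodes:
  assumes "is_dgraph G" "is_path G \<rho>" "i \<le> plen \<rho>"
  shows "pnode \<rho> i \<in> nodes G"
proof (cases i)
  case 0
  then show ?thesis using assms(2) by (simp add: is_path_def)
next
  case (Suc j)
  then have "(pnode \<rho> j, plabel \<rho> i, pnode \<rho> i) \<in> edges G"
    using assms(2,3) by (auto simp: is_path_def)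
  then show ?thesis using assms(1) by (auto simp: is_dgraph_def)
qed

lemma diff_len_query_iff_less:
  "diff_len_query G u v \<longleftrightarrow>
     (\<exists>\<rho> \<omega>. is_path G \<rho> \<and> is_path G \<omega> \<and> pnode \<rho> 0 = u \<and> pnode \<rho> (plen \<rho>) = v \<and>
        pnode \<omega> 0 = u \<and> pnode \<omega> (plen \<omega>) = v \<and> plen \<rho> < plen \<omega>)"
  unfolding diff_len_query_def by (metis less_irrefl linorder_neq_iff)

lemma sat_diff_len_fm:
  assumes G: "is_dgraph G" and "u \<in> nodes G" "v \<in> nodes G"
  shows "sat G (st_assign u v) (\<lambda>_. 0) diff_len_fm \<longleftrightarrow> diff_len_query G u v"
proof -
  have idof_eq: "idof G (pnode \<rho> i) = idof G w \<longleftrightarrow> pnode \<rho> i = w"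
    if "is_path G \<rho>" "i \<le> plen \<rho>" "w \<in> nodes G" for \<rho> i w
    using G path_node_in_nodes[OF G that(1,2)] that(3) by (auto simp: is_dgraph_def inj_on_eq_iff)
  then show ?thesis
    using assms(2,3)
    by (simp add: sat_diff_len_fm_iff diff_len_query_iff_less idof_eq cong: conj_cong)
qed

lemma MWL_expressible_diff_len_query: "MWL_expressible diff_len_query"
  unfolding MWL_expressible_def expresses_def
  using wf_MWL_diff_len_fm diff_len_fm_closed sat_diff_len_fm by blast

text \<open>The exponent is \<open>k + 1\<close> so that even after the last round a gap of 1, which the
  successor atom tests, is told apart from larger gaps.\<close>
definition threshold :: "nat \<Rightarrow> int" where
  "threshold k = 2 ^ Suc k"

lemma two_le_threshold: "2 \<le> threshold k"
  using one_le_power[of "2::int" k] by (simp add: threshold_def)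

lemma threshold_Suc: "threshold (Suc k) = 2 * threshold k"
  by (simp add: threshold_def)

definition clamp :: "nat \<Rightarrow> int \<Rightarrow> int" where
  "clamp k x = max (- threshold k) (min (threshold k) x)"

lemma clamp_uminus: "clamp k (- x) = - clamp k x"
  using two_le_threshold[of k] unfolding clamp_def by (simp add: max_def min_def)

lemma clamp_eqD:
  assumes "clamp k d = clamp k d'"
  shows "d < 0 \<longleftrightarrow> d' < 0" "d = 0 \<longleftrightarrow> d' = 0" "d = 1 \<longleftrightarrow> d' = 1"
  using assms two_le_threshold[of k] unfolding clamp_def by (smt (verit))+

lemma clamp_Suc_eqD: "clamp (Suc k) x = clamp (Suc k) y \<Longrightarrow> clamp k x = clamp k y"
  using two_le_threshold[of k] unfolding clamp_def by (smt (verit) threshold_Suc)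

lemma clamp_add_eq:
  assumes "0 \<le> e" "0 \<le> e'" "e = e' \<or> threshold k \<le> e \<and> threshold k \<le> e'"
    and "0 \<le> u" "clamp (Suc k) u = clamp (Suc k) u'"
  shows "clamp k (e + u) = clamp k (e' + u')"
  using assms two_le_threshold[of k] unfolding clamp_def by (smt (verit) threshold_Suc)

definition gaps_agree :: "nat \<Rightarrow> 'm set \<Rightarrow> ('m \<Rightarrow> int) \<Rightarrow> ('m \<Rightarrow> int) \<Rightarrow> bool" where
  "gaps_agree k M f g \<longleftrightarrow> (\<forall>\<mu>\<in>M. \<forall>\<nu>\<in>M. clamp k (f \<nu> - f \<mu>) = clamp k (g \<nu> - g \<mu>))"

lemma gaps_agree_commute: "gaps_agree k M f g \<longleftrightarrow> gaps_agree k M g f"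
  unfolding gaps_agree_def by metis

lemma gaps_agree_Suc: "gaps_agree (Suc k) M f g \<Longrightarrow> gaps_agree k M f g"
  unfolding gaps_agree_def by (blast intro: clamp_Suc_eqD)

lemma gaps_agree_subset:
  assumes "gaps_agree k M f g" "M' \<subseteq> M" "\<And>\<mu>. \<mu> \<in> M' \<Longrightarrow> f' \<mu> = f \<mu> \<and> g' \<mu> = g \<mu>"
  shows "gaps_agree k M' f' g'"
  using assms unfolding gaps_agree_def by (metis subsetD)

lemma gaps_agree_mono: "gaps_agree k M f g \<Longrightarrow> M' \<subseteq> M \<Longrightarrow> gaps_agree k M' f g"
  unfolding gaps_agree_def by blast

lemma gaps_agree_le:
  assumes "gaps_agree k' M f g" "k \<le> k'"
  shows "gaps_agree k M f g"
  using assms(2) by (induction rule: inc_induct) (use assms(1) gaps_agree_Suc in auto)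

lemma gaps_agree_order:
  assumes "gaps_agree k M f g" "\<mu> \<in> M" "\<nu> \<in> M"
  shows "f \<mu> < f \<nu> \<longleftrightarrow> g \<mu> < g \<nu>" "f \<mu> \<le> f \<nu> \<longleftrightarrow> g \<mu> \<le> g \<nu>"
    and "f \<mu> = f \<nu> \<longleftrightarrow> g \<mu> = g \<nu>" "f \<nu> = f \<mu> + 1 \<longleftrightarrow> g \<nu> = g \<mu> + 1"
proof -
  have "clamp k (f \<nu> - f \<mu>) = clamp k (g \<nu> - g \<mu>)" "clamp k (f \<mu> - f \<nu>) = clamp k (g \<mu> - g \<nu>)"
    using assms unfolding gaps_agree_def by blast+
  from clamp_eqD[OF this(1)] clamp_eqD[OF this(2)]
  show "f \<mu> < f \<nu> \<longleftrightarrow> g \<mu> < g \<nu>" "f \<mu> \<le> f \<nu> \<longleftrightarrow> g \<mu> \<le> g \<nu>"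
    and "f \<mu> = f \<nu> \<longleftrightarrow> g \<mu> = g \<nu>" "f \<nu> = f \<mu> + 1 \<longleftrightarrow> g \<nu> = g \<mu> + 1"
    by linarith+
qed

lemma gaps_agree_two_values:
  assumes "threshold k \<le> F" "threshold k \<le> G" "\<And>\<mu>. \<mu> \<in> M \<Longrightarrow> (f \<mu>, g \<mu>) \<in> {(0, 0), (F, G)}"
  shows "gaps_agree k M f g"
proof -
  have "clamp k F = clamp k G"
    using assms(1,2) by (simp add: clamp_def)
  then have "clamp k (f \<nu> - f \<mu>) = clamp k (g \<nu> - g \<mu>)" if "\<mu> \<in> M" "\<nu> \<in> M" for \<mu> \<nu>
    using assms(3)[OF that(1)] assms(3)[OF that(2)] by (auto simp: clamp_uminus)
  then show ?thesis
    unfolding gaps_agree_def by blast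
qed
lemma gaps_agree_insert:
  assumes "gaps_agree k M f g" "\<nu> \<notin> M" "\<And>\<mu>. \<mu> \<in> M \<Longrightarrow> clamp k (z - f \<mu>) = clamp k (z' - g \<mu>)"
  shows "gaps_agree k (insert \<nu> M) (f(\<nu> := z)) (g(\<nu> := z'))"
proof -
  have "clamp k (f \<mu> - z) = clamp k (g \<mu> - z')" if "\<mu> \<in> M" for \<mu>
    using assms(3)[OF that] clamp_uminus[of k "z - f \<mu>"] clamp_uminus[of k "z' - g \<mu>"] by simp
  then show ?thesis
    using assms unfolding gaps_agree_def by auto
qed

text \<open>A new point inserted between two marks is matched by one at the same distance from
  its nearest mark below, or from its nearest mark above, or far from both; this costs one
  halving of the threshold.\<close>
lemma gaps_agree_new_point:
  assumes fin: "finite M" and agree: "gaps_agree (Suc k) M f g"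
    and "\<mu> \<in> M" "\<nu> \<in> M" "f \<mu> \<le> z" "z \<le> f \<nu>"
  shows "\<exists>z'. \<forall>\<kappa>\<in>M. clamp k (z - f \<kappa>) = clamp k (z' - g \<kappa>)"
proof -
  define d where "d = threshold k"
  obtain lo where lo: "lo \<in> M" "f lo \<le> z" and lo_max: "\<And>\<kappa>. \<kappa> \<in> M \<Longrightarrow> f \<kappa> \<le> z \<Longrightarrow> f \<kappa> \<le> f lo"
    using ex_is_arg_min_if_finite[of "{\<kappa>\<in>M. f \<kappa> \<le> z}" "\<lambda>\<kappa>. - f \<kappa>"] fin assms(3,5)
    by (auto simp: is_arg_min_def not_less)
  obtain hi where hi: "hi \<in> M" "z \<le> f hi" and hi_min: "\<And>\<kappa>. \<kappa> \<in> M \<Longrightarrow> z \<le> f \<kappa> \<Longrightarrow> f hi \<le> f \<kappa>"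
    using ex_is_arg_min_if_finite[of "{\<kappa>\<in>M. z \<le> f \<kappa>}" f] fin assms(4,6)
    by (auto simp: is_arg_min_def not_less)
  have clamp_gap: "clamp (Suc k) (f \<kappa>' - f \<kappa>) = clamp (Suc k) (g \<kappa>' - g \<kappa>)"
    if "\<kappa> \<in> M" "\<kappa>' \<in> M" for \<kappa> \<kappa>'
    using agree that unfolding gaps_agree_def by blast
  define z' where "z' = (if z - f lo < d then g lo + (z - f lo)
                         else if f hi - z < d then g hi - (f hi - z) else g lo + d)"
  have lo_hi: "clamp (Suc k) (f hi - f lo) = clamp (Suc k) (g hi - g lo)"
    using clamp_gap[OF lo(1) hi(1)] .
  have gap_lo: "0 \<le> z' - g lo \<and> (z - f lo = z' - g lo \<or> d \<le> z - f lo \<and> d \<le> z' - g lo)"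
    using lo_hi lo(2) hi(2) two_le_threshold[of k]
    unfolding z'_def d_def clamp_def by (smt (verit) threshold_Suc)
  have gap_hi: "0 \<le> g hi - z' \<and> (f hi - z = g hi - z' \<or> d \<le> f hi - z \<and> d \<le> g hi - z')"
    using lo_hi lo(2) hi(2) two_le_threshold[of k]
    unfolding z'_def d_def clamp_def by (smt (verit) threshold_Suc)
  have "clamp k (z - f \<kappa>) = clamp k (z' - g \<kappa>)" if \<kappa>: "\<kappa> \<in> M" for \<kappa>
  proof (cases "f \<kappa> \<le> z")
    case True
    then have below: "0 \<le> f lo - f \<kappa>" using lo_max[OF \<kappa>] by simp
    have "clamp k ((z - f lo) + (f lo - f \<kappa>)) = clamp k ((z' - g lo) + (g lo - g \<kappa>))"
      using gap_lo lo(2) unfolding d_def by (intro clamp_add_eq below clamp_gap[OF \<kappa> lo(1)]) auto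
    then show ?thesis by simp
  next
    case False
    then have above: "0 \<le> f \<kappa> - f hi" using hi_min[OF \<kappa>] by simp
    have "clamp k ((f hi - z) + (f \<kappa> - f hi)) = clamp k ((g hi - z') + (g \<kappa> - g hi))"
      using gap_hi hi(2) unfolding d_def by (intro clamp_add_eq above clamp_gap[OF hi(1) \<kappa>]) auto
    then show ?thesis
      using clamp_uminus[of k "f \<kappa> - z"] clamp_uminus[of k "g \<kappa> - z'"] by simp
  qed
  then show ?thesis by blast
qed

lemma gaps_agree_extend:
  assumes "finite M" "gaps_agree (Suc k) M f g" "\<mu> \<in> M" "\<nu> \<in> M" "f \<mu> \<le> z" "z \<le> f \<nu>"
    and "\<kappa> \<notin> M"
  shows "\<exists>z'. gaps_agree k (insert \<kappa> M) (f(\<kappa> := z)) (g(\<kappa> := z'))"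
  using gaps_agree_new_point[OF assms(1-6)] gaps_agree_insert[OF gaps_agree_Suc[OF assms(2)] assms(7)]
  by blast

lemma gaps_agree_extend_segment:
  assumes "finite M" "gaps_agree (Suc (Suc k)) M f g" "\<mu> \<in> M" "\<nu> \<in> M"
    and "f \<mu> \<le> a" "a \<le> b" "b \<le> f \<nu>" "\<kappa> \<notin> M" "\<kappa>' \<notin> M" "\<kappa> \<noteq> \<kappa>'"
  shows "\<exists>a' b'. g \<mu> \<le> a' \<and> a' \<le> b' \<and> b' \<le> g \<nu> \<and>
    gaps_agree k (insert \<kappa>' (insert \<kappa> M)) (f(\<kappa> := a, \<kappa>' := b)) (g(\<kappa> := a', \<kappa>' := b'))"
proof -
  have ne: "\<mu> \<noteq> \<kappa>" "\<mu> \<noteq> \<kappa>'" "\<nu> \<noteq> \<kappa>" "\<nu> \<noteq> \<kappa>'"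
    using assms(3,4,8,9) by auto
  obtain a' where ext1: "gaps_agree (Suc k) (insert \<kappa> M) (f(\<kappa> := a)) (g(\<kappa> := a'))"
    using gaps_agree_extend[OF assms(1-5) _ assms(8)] assms(6,7) by fastforce
  have "finite (insert \<kappa> M)" "\<kappa> \<in> insert \<kappa> M" "\<nu> \<in> insert \<kappa> M" "\<kappa>' \<notin> insert \<kappa> M"
    "(f(\<kappa> := a)) \<kappa> \<le> b" "b \<le> (f(\<kappa> := a)) \<nu>"
    using assms ne by auto
  then obtain b' where ext: "gaps_agree k (insert \<kappa>' (insert \<kappa> M))
      (f(\<kappa> := a, \<kappa>' := b)) (g(\<kappa> := a', \<kappa>' := b'))"
    using gaps_agree_extend[OF _ ext1] by blast
  have "g \<mu> \<le> a'" "a' \<le> b'" "b' \<le> g \<nu>"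
    using gaps_agree_order(2)[OF ext, of \<mu> \<kappa>] gaps_agree_order(2)[OF ext, of \<kappa> \<kappa>']
      gaps_agree_order(2)[OF ext, of \<kappa>' \<nu>] assms(3-10) ne by auto
  with ext show ?thesis
    by blast
qed

text \<open>Two branches from node 0 to node 1 that share only their end points; the inner node at
  height \<open>h\<close> of branch \<open>b\<close> is \<open>2 h + b\<close>.\<close>
definition theta_node :: "(bool \<Rightarrow> nat) \<Rightarrow> bool \<Rightarrow> nat \<Rightarrow> nat" where
  "theta_node len b h = (if h = 0 then 0 else if h = len b then 1 else 2 * h + of_bool b)"

definition nat_embedding :: "nat \<Rightarrow> 'i::infinite" where
  "nat_embedding = (SOME f. inj f)"

lemma inj_nat_embedding: "inj (nat_embedding :: nat \<Rightarrow> 'i::infinite)"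
proof -
  obtain f :: "nat \<Rightarrow> 'i" where "inj f" using arb_countable_map[of "{}"] by blast
  then show ?thesis unfolding nat_embedding_def by (metis someI)
qed

definition theta :: "'a \<Rightarrow> (bool \<Rightarrow> nat) \<Rightarrow> ('a, 'i::infinite, 'd) dgraph" where
  "theta c len = \<lparr>nodes = {theta_node len b h | b h. h \<le> len b},
     edges = {(theta_node len b h, c, theta_node len b (Suc h)) | b h. h < len b},
     idof = nat_embedding, dataof = (\<lambda>_. undefined)\<rparr>"

lemma theta_node_eq_0_iff: "h \<le> len b \<Longrightarrow> theta_node len b h = 0 \<longleftrightarrow> h = 0"
  by (simp add: theta_node_def)

lemma theta_node_eq_1_iff: "0 < len b \<Longrightarrow> h \<le> len b \<Longrightarrow> theta_node len b h = 1 \<longleftrightarrow> h = len b"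
  by (simp add: theta_node_def)

lemma theta_node_eq_iff:
  assumes "0 < len b" "0 < len b'" "h \<le> len b" "h' \<le> len b'"
  shows "theta_node len b h = theta_node len b' h' \<longleftrightarrow>
    h = 0 \<and> h' = 0 \<or> h = len b \<and> h' = len b' \<or> b = b' \<and> h = h'"
proof -
  have "Suc (2 * x) \<noteq> 2 * y" for x y :: nat
    by presburger
  then show ?thesis
    using assms unfolding theta_node_def by (cases b; cases b') (auto dest: sym)
qed

lemma nodes_theta: "nodes (theta c len) = (\<lambda>(b, h). theta_node len b h) ` (SIGMA b:UNIV. {..len b})"
  by (auto simp: theta_def)

lemma is_dgraph_theta: "is_dgraph (theta c len)"
  unfolding is_dgraph_def
proof (intro conjI)
  show "finite (nodes (theta c len))"
    by (simp add: nodes_theta)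
  show "nodes (theta c len) \<noteq> {}"
    by (force simp: nodes_theta)
  show "edges (theta c len) \<subseteq> nodes (theta c len) \<times> UNIV \<times> nodes (theta c len)"
    by (fastforce simp: theta_def)
  show "inj_on (idof (theta c len)) (nodes (theta c len))"
    by (simp add: theta_def inj_on_subset[OF inj_nat_embedding])
qed

lemma theta_ends_in_nodes:
  assumes "0 < len False"
  shows "0 \<in> nodes (theta c len)" "1 \<in> nodes (theta c len)"
proof -
  have "theta_node len False 0 = 0" "theta_node len False (len False) = 1"
    using assms by (simp_all add: theta_node_def)
  then show "0 \<in> nodes (theta c len)" "1 \<in> nodes (theta c len)"
    unfolding nodes_theta by (metis (no_types, lifting) SigmaI UNIV_I atMost_iff case_prod_conv
        image_eqI le0 order_refl)+
qed

lemma theta_edge_from_inner: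
  assumes "(theta_node len b h, l, w) \<in> edges (theta c len)" "0 < h" "h \<le> len b" "\<forall>b. 0 < len b"
  shows "h < len b \<and> w = theta_node len b (Suc h) \<and> l = c"
proof -
  obtain b' h' where "h' < len b'" "theta_node len b h = theta_node len b' h'"
    "w = theta_node len b' (Suc h')" "l = c"
    using assms(1) by (auto simp: theta_def)
  with assms(2-4) theta_node_eq_iff[of len b b' h h'] show ?thesis by auto
qed

definition on_branch :: "'a \<Rightarrow> (bool \<Rightarrow> nat) \<Rightarrow> bool \<Rightarrow> nat \<Rightarrow> 'a path \<Rightarrow> bool" where
  "on_branch c len b a \<rho> \<longleftrightarrow> a + plen \<rho> \<le> len b \<and> (\<forall>i\<le>plen \<rho>. pnode \<rho> i = theta_node len b (a + i))
     \<and> (\<forall>i. 1 \<le> i \<and> i \<le> plen \<rho> \<longrightarrow> plabel \<rho> i = c)"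

lemma theta_path_on_branch:
  assumes pos: "\<forall>b. 0 < len b" and path: "is_path (theta c len :: ('a, 'i::infinite, 'd) dgraph) \<rho>"
  shows "\<exists>b a. on_branch c len b a \<rho>"
proof (cases "plen \<rho> = 0")
  case True
  have "pnode \<rho> 0 \<in> nodes (theta c len :: ('a, 'i, 'd) dgraph)"
    using path by (simp add: is_path_def)
  then obtain b a where "pnode \<rho> 0 = theta_node len b a" "a \<le> len b"
    by (auto simp: theta_def)
  with True show ?thesis by (auto simp: on_branch_def)
next
  case False
  have edge: "(pnode \<rho> (i - 1), plabel \<rho> i, pnode \<rho> i) \<in> edges (theta c len :: ('a, 'i, 'd) dgraph)"
    if "1 \<le> i" "i \<le> plen \<rho>" for i
    using path that unfolding is_path_def by blast
  obtain b a where a: "a < len b" "pnode \<rho> 0 = theta_node len b a"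
    and first: "pnode \<rho> 1 = theta_node len b (Suc a)" "plabel \<rho> 1 = c"
    using edge[of 1] False by (auto simp: theta_def)
  have climb: "pnode \<rho> i = theta_node len b (a + i) \<and> a + i \<le> len b \<and> plabel \<rho> i = c"
    if "1 \<le> i" "i \<le> plen \<rho>" for i
    using that
  proof (induction i rule: dec_induct)
    case base
    then show ?case using a first by simp
  next
    case (step n)
    then have n: "pnode \<rho> n = theta_node len b (a + n)" "a + n \<le> len b" by simp_all
    have "(theta_node len b (a + n), plabel \<rho> (Suc n), pnode \<rho> (Suc n))
        \<in> edges (theta c len :: ('a, 'i, 'd) dgraph)"
      using edge[of "Suc n"] step.prems n(1) by simp
    from theta_edge_from_inner[OF this _ n(2) pos] step.hyps(1) show ?case by simp
  qed
  have "a + plen \<rho> \<le> len b"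
    using climb[of "plen \<rho>"] False by simp
  moreover have "pnode \<rho> i = theta_node len b (a + i)" if "i \<le> plen \<rho>" for i
    using climb[of i] that a(2) by (cases "i = 0") simp_all
  moreover have "plabel \<rho> i = c" if "1 \<le> i" "i \<le> plen \<rho>" for i
    using climb[OF that] by simp
  ultimately show ?thesis
    unfolding on_branch_def by blast
qed

definition branch_walk :: "'a \<Rightarrow> (bool \<Rightarrow> nat) \<Rightarrow> bool \<Rightarrow> nat \<Rightarrow> nat \<Rightarrow> 'a path" where
  "branch_walk c len b a k = (map (\<lambda>i. theta_node len b (a + i)) [0..<Suc k], replicate k c)"

lemma plen_branch_walk [simp]: "plen (branch_walk c len b a k) = k"
  by (simp add: branch_walk_def plen_def)

lemma branch_walk_on_branch: "a + k \<le> len b \<Longrightarrow> on_branch c len b a (branch_walk c len b a k)"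
  by (auto simp: on_branch_def branch_walk_def pnode_def plabel_def plen_def nth_append
      simp del: upt_Suc)

lemma on_branch_is_path:
  assumes "on_branch c len b a \<rho>" "length (fst \<rho>) = Suc (plen \<rho>)"
  shows "is_path (theta c len) \<rho>"
  unfolding is_path_def
proof (intro conjI allI impI)
  show "length (fst \<rho>) = Suc (length (snd \<rho>))" using assms(2) by (simp add: plen_def)
  show "pnode \<rho> 0 \<in> nodes (theta c len)"
    using assms(1) by (force simp: on_branch_def nodes_theta)
  fix i assume i: "1 \<le> i \<and> i \<le> plen \<rho>"
  then have "pnode \<rho> (i - 1) = theta_node len b (a + (i - 1))" "pnode \<rho> i = theta_node len b (Suc (a + (i - 1)))"
    "plabel \<rho> i = c" "a + (i - 1) < len b"
    using assms(1) by (auto simp: on_branch_def)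
  then show "(pnode \<rho> (i - 1), plabel \<rho> i, pnode \<rho> i) \<in> edges (theta c len)"
    by (auto simp: theta_def)
qed

lemma branch_walk_is_path: "a + k \<le> len b \<Longrightarrow> is_path (theta c len) (branch_walk c len b a k)"
  by (rule on_branch_is_path[OF branch_walk_on_branch]) (simp_all add: branch_walk_def plen_def)

lemma theta_path_from_0_to_1:
  assumes pos: "\<forall>b. 0 < len b" and "is_path (theta c len :: ('a, 'i::infinite, 'd) dgraph) \<rho>"
    and "pnode \<rho> 0 = 0" "pnode \<rho> (plen \<rho>) = 1"
  shows "\<exists>b. plen \<rho> = len b"
proof -
  obtain b a where \<rho>: "on_branch c len b a \<rho>"
    using theta_path_on_branch[OF assms(1,2)] by blast
  then have "theta_node len b a = 0" "theta_node len b (a + plen \<rho>) = 1" "a + plen \<rho> \<le> len b"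
    using assms(3,4) by (auto simp: on_branch_def)
  with pos show ?thesis
    using theta_node_eq_0_iff[of a len b] theta_node_eq_1_iff[of len b "a + plen \<rho>"] by auto
qed

lemma diff_len_query_theta:
  assumes pos: "\<forall>b. 0 < len b"
  shows "diff_len_query (theta c len :: ('a, 'i::infinite, 'd) dgraph) 0 1 \<longleftrightarrow> len True \<noteq> len False"
proof
  assume "diff_len_query (theta c len :: ('a, 'i, 'd) dgraph) 0 1"
  then obtain \<rho> \<rho>' where "is_path (theta c len :: ('a, 'i, 'd) dgraph) \<rho>"
    "is_path (theta c len :: ('a, 'i, 'd) dgraph) \<rho>'"
    "pnode \<rho> 0 = 0" "pnode \<rho> (plen \<rho>) = 1" "pnode \<rho>' 0 = 0" "pnode \<rho>' (plen \<rho>') = 1"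
    "plen \<rho> \<noteq> plen \<rho>'"
    unfolding diff_len_query_def by blast
  with theta_path_from_0_to_1[OF pos] obtain b b' where "plen \<rho> = len b" "plen \<rho>' = len b'"
    by metis
  with \<open>plen \<rho> \<noteq> plen \<rho>'\<close> show "len True \<noteq> len False"
    by (cases b; cases b') auto
next
  assume "len True \<noteq> len False"
  moreover have "is_path (theta c len :: ('a, 'i, 'd) dgraph) (branch_walk c len b 0 (len b))"
    "pnode (branch_walk c len b 0 (len b)) 0 = 0"
    "pnode (branch_walk c len b 0 (len b)) (len b) = 1" for b
    using branch_walk_is_path[of 0 "len b" len b c] branch_walk_on_branch[of 0 "len b" len b c] pos
    by (auto simp: on_branch_def theta_node_def)
  ultimately show "diff_len_query (theta c len :: ('a, 'i, 'd) dgraph) 0 1"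
    unfolding diff_len_query_def
    by (intro exI[of _ "branch_walk c len True 0 (len True)"] exI[of _ "branch_walk c len False 0 (len False)"])
      simp
qed

datatype mark = Src | Tgt | Start pathvar | Stop pathvar | At posvar

fun coord :: "(bool \<Rightarrow> nat) \<Rightarrow> (pathvar \<Rightarrow> 'a path) \<Rightarrow> (posvar \<Rightarrow> nat) \<Rightarrow> (pathvar \<Rightarrow> nat) \<Rightarrow>
    bool \<Rightarrow> mark \<Rightarrow> int" where
  "coord len P L a b Src = 0"
| "coord len P L a b Tgt = int (len b)"
| "coord len P L a b (Start p) = int (a p)"
| "coord len P L a b (Stop p) = int (a p + plen (P p))"
| "coord len P L a b (At x) = int (a (snd x) + L x)"

fun marked :: "pathvar set \<Rightarrow> posvar set \<Rightarrow> (pathvar \<Rightarrow> bool) \<Rightarrow> bool \<Rightarrow> mark \<Rightarrow> bool" where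
  "marked PV XV br b Src = True"
| "marked PV XV br b Tgt = True"
| "marked PV XV br b (Start p) = (p \<in> PV \<and> br p = b)"
| "marked PV XV br b (Stop p) = (p \<in> PV \<and> br p = b)"
| "marked PV XV br b (At x) = (x \<in> XV \<and> br (snd x) = b)"

definition marks :: "pathvar set \<Rightarrow> posvar set \<Rightarrow> (pathvar \<Rightarrow> bool) \<Rightarrow> bool \<Rightarrow> mark set" where
  "marks PV XV br b = {\<mu>. marked PV XV br b \<mu>}"

lemma finite_marks:
  assumes "finite PV" "finite XV"
  shows "finite (marks PV XV br b)"
proof (rule finite_subset)
  show "marks PV XV br b \<subseteq> {Src, Tgt} \<union> Start ` PV \<union> Stop ` PV \<union> At ` XV"
  proof
    fix \<mu> assume "\<mu> \<in> marks PV XV br b"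
    then show "\<mu> \<in> {Src, Tgt} \<union> Start ` PV \<union> Stop ` PV \<union> At ` XV"
      by (cases \<mu>) (simp_all add: marks_def)
  qed
  show "finite ({Src, Tgt} \<union> Start ` PV \<union> Stop ` PV \<union> At ` XV)"
    using assms by simp
qed

lemma marks_mono: "PV' \<subseteq> PV \<Longrightarrow> XV' \<subseteq> XV \<Longrightarrow> marks PV' XV' br b \<subseteq> marks PV XV br b"
  unfolding marks_def by (auto elim!: marked.elims)

lemma marks_insert_At:
  "marks PV (insert x XV) br b =
     (if br (snd x) = b then insert (At x) (marks PV (XV - {x}) br b) else marks PV (XV - {x}) br b)"
proof (rule set_eqI)
  fix \<mu> show "\<mu> \<in> marks PV (insert x XV) br b \<longleftrightarrow>
    \<mu> \<in> (if br (snd x) = b then insert (At x) (marks PV (XV - {x}) br b) else marks PV (XV - {x}) br b)"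
    by (cases \<mu>) (auto simp: marks_def)
qed

lemma marks_insert_path:
  assumes "\<forall>y\<in>XV. snd y \<noteq> p"
  shows "marks (insert p PV) XV (br(p := b0)) b =
     (if b0 = b then insert (Stop p) (insert (Start p) (marks (PV - {p}) XV br b))
      else marks (PV - {p}) XV br b)"
proof (rule set_eqI)
  fix \<mu> show "\<mu> \<in> marks (insert p PV) XV (br(p := b0)) b \<longleftrightarrow> \<mu> \<in> (if b0 = b
      then insert (Stop p) (insert (Start p) (marks (PV - {p}) XV br b)) else marks (PV - {p}) XV br b)"
    using assms by (cases \<mu>) (auto simp: marks_def)
qed

lemma coord_upd_pos: "coord len P (L(x := i)) a b = (coord len P L a b)(At x := int (a (snd x) + i))"
proof
  fix \<mu> show "coord len P (L(x := i)) a b \<mu> = ((coord len P L a b)(At x := int (a (snd x) + i))) \<mu>"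
    by (cases \<mu>) auto
qed

lemma coord_upd_path:
  assumes "\<mu> \<in> marks (PV - {p}) XV br b" "\<forall>y\<in>XV. snd y \<noteq> p"
  shows "coord len (P(p := \<rho>)) L (a(p := u)) b \<mu> = coord len P L a b \<mu>"
  using assms by (cases \<mu>) (auto simp: marks_def)

lemma gaps_agree_upd_pos:
  assumes new: "gaps_agree k (insert (At x) (marks PV (XV - {x}) br (br (snd x))))
      ((coord len1 P1 L1 a1 (br (snd x)))(At x := int (a1 (snd x) + i)))
      ((coord len2 P2 L2 a2 (br (snd x)))(At x := int (a2 (snd x) + j)))"
    and old: "gaps_agree k (marks PV XV br b) (coord len1 P1 L1 a1 b) (coord len2 P2 L2 a2 b)"
  shows "gaps_agree k (marks PV (insert x XV) br b)
    (coord len1 P1 (L1(x := i)) a1 b) (coord len2 P2 (L2(x := j)) a2 b)"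
proof (cases "br (snd x) = b")
  case True
  with new show ?thesis
    by (simp add: marks_insert_At coord_upd_pos)
next
  case False
  then have "marks PV (insert x XV) br b \<subseteq> marks PV XV br b" "At x \<notin> marks PV (insert x XV) br b"
    by (simp_all add: marks_insert_At marks_mono) (simp add: marks_def)
  then show ?thesis
    by (intro gaps_agree_subset[OF old]) (auto simp: coord_upd_pos)
qed

lemma gaps_agree_upd_path:
  assumes XV: "\<forall>y\<in>XV. snd y \<noteq> p"
    and new: "gaps_agree k (insert (Stop p) (insert (Start p) (marks (PV - {p}) XV br b0)))
      ((coord len1 P1 L1 a1 b0)(Start p := int u1, Stop p := int (u1 + plen \<rho>1)))
      ((coord len2 P2 L2 a2 b0)(Start p := int u2, Stop p := int (u2 + plen \<rho>2)))"
    and old: "gaps_agree k (marks PV XV br b) (coord len1 P1 L1 a1 b) (coord len2 P2 L2 a2 b)"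
  shows "gaps_agree k (marks (insert p PV) XV (br(p := b0)) b)
    (coord len1 (P1(p := \<rho>1)) L1 (a1(p := u1)) b) (coord len2 (P2(p := \<rho>2)) L2 (a2(p := u2)) b)"
proof -
  have unchanged: "coord len1 (P1(p := \<rho>1)) L1 (a1(p := u1)) b' \<mu> = coord len1 P1 L1 a1 b' \<mu>"
    "coord len2 (P2(p := \<rho>2)) L2 (a2(p := u2)) b' \<mu> = coord len2 P2 L2 a2 b' \<mu>"
    if "\<mu> \<in> marks (PV - {p}) XV br b'" for b' \<mu>
    by (rule coord_upd_path[OF that XV])+
  show ?thesis
  proof (cases "b0 = b")
    case True
    with unchanged show ?thesis
      by (intro gaps_agree_subset[OF new]) (auto simp: marks_insert_path[OF XV])
  next
    case False
    have "marks (PV - {p}) XV br b \<subseteq> marks PV XV br b"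
      by (rule marks_mono) auto
    with False unchanged show ?thesis
      by (intro gaps_agree_subset[OF old]) (auto simp: marks_insert_path[OF XV])
  qed
qed

definition placed :: "'a \<Rightarrow> (bool \<Rightarrow> nat) \<Rightarrow> pathvar set \<Rightarrow> posvar set \<Rightarrow> (pathvar \<Rightarrow> bool) \<Rightarrow>
    (pathvar \<Rightarrow> nat) \<Rightarrow> (pathvar \<Rightarrow> 'a path) \<Rightarrow> (posvar \<Rightarrow> nat) \<Rightarrow> bool" where
  "placed c len PV XV br a P L \<longleftrightarrow> (\<forall>b. 0 < len b) \<and>
     (\<forall>p\<in>PV. on_branch c len (br p) (a p) (P p)) \<and> (\<forall>x\<in>XV. snd x \<in> PV \<and> L x \<le> plen (P (snd x)))"

text \<open>A winning position of Duplicator in the \<open>k\<close>-round game on two theta graphs: each path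
  lies on the same branch in both graphs, and on every branch the marked points of the two
  graphs are ordered alike, with equal gaps up to \<open>threshold k\<close>.\<close>
definition game_equiv :: "'a \<Rightarrow> nat \<Rightarrow> pathvar set \<Rightarrow> posvar set \<Rightarrow>
    (bool \<Rightarrow> nat) \<Rightarrow> (pathvar \<Rightarrow> 'a path) \<Rightarrow> (posvar \<Rightarrow> nat) \<Rightarrow>
    (bool \<Rightarrow> nat) \<Rightarrow> (pathvar \<Rightarrow> 'a path) \<Rightarrow> (posvar \<Rightarrow> nat) \<Rightarrow> bool" where
  "game_equiv c k PV XV len1 P1 L1 len2 P2 L2 \<longleftrightarrow> finite PV \<and> finite XV \<and>
     (\<exists>br a1 a2. placed c len1 PV XV br a1 P1 L1 \<and> placed c len2 PV XV br a2 P2 L2 \<and>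
        (\<forall>b. gaps_agree k (marks PV XV br b) (coord len1 P1 L1 a1 b) (coord len2 P2 L2 a2 b)))"

lemma game_equivI:
  assumes "finite PV" "finite XV" "placed c len1 PV XV br a1 P1 L1" "placed c len2 PV XV br a2 P2 L2"
    and "\<And>b. gaps_agree k (marks PV XV br b) (coord len1 P1 L1 a1 b) (coord len2 P2 L2 a2 b)"
  shows "game_equiv c k PV XV len1 P1 L1 len2 P2 L2"
  using assms unfolding game_equiv_def by blast

lemma game_equiv_sym:
  "game_equiv c k PV XV len1 P1 L1 len2 P2 L2 \<Longrightarrow> game_equiv c k PV XV len2 P2 L2 len1 P1 L1"
  unfolding game_equiv_def by (metis gaps_agree_commute)

lemma placed_node:
  assumes "placed c len PV XV br a P L" "x \<in> XV"
  shows "pnode (P (snd x)) (L x) = theta_node len (br (snd x)) (a (snd x) + L x)"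
    and "a (snd x) + L x \<le> len (br (snd x))"
proof -
  have "on_branch c len (br (snd x)) (a (snd x)) (P (snd x))" "L x \<le> plen (P (snd x))"
    using assms by (auto simp: placed_def)
  then show "pnode (P (snd x)) (L x) = theta_node len (br (snd x)) (a (snd x) + L x)"
    and "a (snd x) + L x \<le> len (br (snd x))"
    unfolding on_branch_def by auto
qed

lemma placed_node_eq_iff:
  assumes "placed c len PV XV br a P L" "x \<in> XV" "y \<in> XV"
  shows "pnode (P (snd x)) (L x) = pnode (P (snd y)) (L y) \<longleftrightarrow>
    a (snd x) + L x = 0 \<and> a (snd y) + L y = 0 \<or>
    a (snd x) + L x = len (br (snd x)) \<and> a (snd y) + L y = len (br (snd y)) \<or>
    br (snd x) = br (snd y) \<and> a (snd x) + L x = a (snd y) + L y"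
  using assms(1) placed_node[OF assms(1,2)] placed_node[OF assms(1,3)]
  by (simp add: placed_def theta_node_eq_iff)

lemma At_in_marks: "x \<in> XV \<Longrightarrow> br (snd x) = b \<Longrightarrow> At x \<in> marks PV XV br b"
  by (simp add: marks_def)

lemma Src_Tgt_in_marks: "Src \<in> marks PV XV br b" "Tgt \<in> marks PV XV br b"
  by (simp_all add: marks_def)

lemma game_equiv_same_path:
  assumes "game_equiv c k PV XV len1 P1 L1 len2 P2 L2" "x \<in> XV" "y \<in> XV" "snd x = snd y"
  shows "L1 x < L1 y \<longleftrightarrow> L2 x < L2 y" "L1 y = L1 x + 1 \<longleftrightarrow> L2 y = L2 x + 1"
proof -
  obtain br a1 a2 where agree:
    "gaps_agree k (marks PV XV br (br (snd x))) (coord len1 P1 L1 a1 (br (snd x)))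
       (coord len2 P2 L2 a2 (br (snd x)))"
    using assms(1) unfolding game_equiv_def by blast
  have "At x \<in> marks PV XV br (br (snd x))" "At y \<in> marks PV XV br (br (snd x))"
    using assms(2-4) by (simp_all add: marks_def)
  note order = gaps_agree_order[OF agree this]
  show "L1 x < L1 y \<longleftrightarrow> L2 x < L2 y"
    using order(1) assms(4) by simp
  have int_succ_iff: "int m = int n + 1 \<longleftrightarrow> m = n + 1" for m n
    by arith
  show "L1 y = L1 x + 1 \<longleftrightarrow> L2 y = L2 x + 1"
    using order(4) assms(4) by (simp add: int_succ_iff)
qed

lemma game_equiv_node_eq_iff:
  assumes "game_equiv c k PV XV len1 P1 L1 len2 P2 L2" "x \<in> XV" "y \<in> XV"
  shows "pnode (P1 (snd x)) (L1 x) = pnode (P1 (snd y)) (L1 y) \<longleftrightarrow>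
    pnode (P2 (snd x)) (L2 x) = pnode (P2 (snd y)) (L2 y)"
proof -
  obtain br a1 a2 where pl: "placed c len1 PV XV br a1 P1 L1" "placed c len2 PV XV br a2 P2 L2"
    and agree: "\<And>b. gaps_agree k (marks PV XV br b) (coord len1 P1 L1 a1 b) (coord len2 P2 L2 a2 b)"
    using assms(1) unfolding game_equiv_def by blast
  note eq_iff = gaps_agree_order(3)[OF agree]
  have bottom: "a1 (snd z) + L1 z = 0 \<longleftrightarrow> a2 (snd z) + L2 z = 0" if "z \<in> XV" for z
    using eq_iff[OF Src_Tgt_in_marks(1) At_in_marks[OF that refl]] by auto
  have top: "a1 (snd z) + L1 z = len1 (br (snd z)) \<longleftrightarrow> a2 (snd z) + L2 z = len2 (br (snd z))"
    if "z \<in> XV" for z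
    using eq_iff[OF Src_Tgt_in_marks(2) At_in_marks[OF that refl]] by auto
  have level: "a1 (snd x) + L1 x = a1 (snd y) + L1 y \<longleftrightarrow> a2 (snd x) + L2 x = a2 (snd y) + L2 y"
    if "br (snd x) = br (snd y)"
    using eq_iff[OF At_in_marks[OF assms(2) refl] At_in_marks[where br = br, OF assms(3) that[symmetric]]]
    unfolding coord.simps by arith
  show ?thesis
    unfolding placed_node_eq_iff[OF pl(1) assms(2,3)] placed_node_eq_iff[OF pl(2) assms(2,3)]
      bottom[OF assms(2)] bottom[OF assms(3)] top[OF assms(2)] top[OF assms(3)]
    using level by blast
qed

lemma game_equiv_ExPos:
  assumes equiv: "game_equiv c (Suc k) PV XV len1 P1 L1 len2 P2 L2"
    and x: "snd x \<in> PV" and i: "i \<le> plen (P1 (snd x))"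
  shows "\<exists>j\<le>plen (P2 (snd x)).
    game_equiv c k PV (insert x XV) len1 P1 (L1(x := i)) len2 P2 (L2(x := j))"
proof -
  obtain br a1 a2 where fin: "finite PV" "finite XV"
    and pl: "placed c len1 PV XV br a1 P1 L1" "placed c len2 PV XV br a2 P2 L2"
    and agree: "\<And>b. gaps_agree (Suc k) (marks PV XV br b) (coord len1 P1 L1 a1 b) (coord len2 P2 L2 a2 b)"
    using equiv unfolding game_equiv_def by blast
  define q where "q = snd x"
  define M where "M b = marks PV (XV - {x}) br b" for b
  have M: "Start q \<in> M (br q)" "Stop q \<in> M (br q)" "At x \<notin> M b" for b
    using x by (simp_all add: M_def q_def marks_def)
  have M_sub: "M b \<subseteq> marks PV XV br b" for b
    by (simp add: M_def marks_mono)
  have "finite (M (br q))"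
    using fin by (simp add: M_def finite_marks)
  moreover have "gaps_agree (Suc k) (M (br q)) (coord len1 P1 L1 a1 (br q)) (coord len2 P2 L2 a2 (br q))"
    using agree M_sub by (rule gaps_agree_mono)
  ultimately obtain z where ext: "gaps_agree k (insert (At x) (M (br q)))
      ((coord len1 P1 L1 a1 (br q))(At x := int (a1 q + i))) ((coord len2 P2 L2 a2 (br q))(At x := z))"
    using gaps_agree_extend[where \<mu> = "Start q" and \<nu> = "Stop q" and z = "int (a1 q + i)"] M i
    by (fastforce simp: q_def)
  have "int (a2 q) \<le> z" "z \<le> int (a2 q + plen (P2 q))"
    using gaps_agree_order(2)[OF ext, of "Start q" "At x"] gaps_agree_order(2)[OF ext, of "At x" "Stop q"]
      M i by (auto simp: q_def)
  then obtain j where j: "z = int (a2 q + j)" "j \<le> plen (P2 q)"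
    by (intro that[of "nat (z - int (a2 q))"]) auto
  have "gaps_agree k (marks PV (insert x XV) br b)
      (coord len1 P1 (L1(x := i)) a1 b) (coord len2 P2 (L2(x := j)) a2 b)" for b
    using ext j(1) by (intro gaps_agree_upd_pos gaps_agree_Suc[OF agree]) (simp add: M_def q_def)
  moreover have "placed c len1 PV (insert x XV) br a1 P1 (L1(x := i))"
    "placed c len2 PV (insert x XV) br a2 P2 (L2(x := j))"
    using pl x i j(2) by (auto simp: placed_def q_def)
  ultimately have "game_equiv c k PV (insert x XV) len1 P1 (L1(x := i)) len2 P2 (L2(x := j))"
    using fin by (intro game_equivI) auto
  with j(2) show ?thesis
    by (auto simp: q_def)
qed

lemma game_equiv_ExPath:
  assumes equiv: "game_equiv c (Suc (Suc k)) PV XV len1 P1 L1 len2 P2 L2"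
    and \<rho>: "is_path (theta c len1 :: ('a, 'i::infinite, 'd) dgraph) \<rho>"
  shows "\<exists>\<rho>'. is_path (theta c len2 :: ('a, 'i, 'd) dgraph) \<rho>' \<and>
    game_equiv c k (insert p PV) {y \<in> XV. snd y \<noteq> p} len1 (P1(p := \<rho>)) L1 len2 (P2(p := \<rho>')) L2"
proof -
  obtain br a1 a2 where fin: "finite PV" "finite XV"
    and pl: "placed c len1 PV XV br a1 P1 L1" "placed c len2 PV XV br a2 P2 L2"
    and agree: "\<And>b. gaps_agree (Suc (Suc k)) (marks PV XV br b) (coord len1 P1 L1 a1 b) (coord len2 P2 L2 a2 b)"
    using equiv unfolding game_equiv_def by blast
  obtain b0 u where on: "on_branch c len1 b0 u \<rho>"
    using theta_path_on_branch[OF _ \<rho>] pl(1) by (auto simp: placed_def)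
  define XV0 where "XV0 = {y \<in> XV. snd y \<noteq> p}"
  define M where "M b = marks (PV - {p}) XV0 br b" for b
  have XV0: "\<forall>y\<in>XV0. snd y \<noteq> p" and XV0_sub: "XV0 \<subseteq> XV"
    by (auto simp: XV0_def)
  have M: "Src \<in> M b0" "Tgt \<in> M b0" "Start p \<notin> M b0" "Stop p \<notin> M b0"
    by (simp_all add: M_def marks_def)
  have M_sub: "M b \<subseteq> marks PV XV br b" for b
    unfolding M_def using XV0_sub by (rule marks_mono[rotated]) auto
  have "finite (M b0)"
    using fin by (simp add: M_def XV0_def finite_marks)
  moreover have "gaps_agree (Suc (Suc k)) (M b0) (coord len1 P1 L1 a1 b0) (coord len2 P2 L2 a2 b0)"
    using agree M_sub by (rule gaps_agree_mono)
  moreover have "0 \<le> int u" "int u \<le> int (u + plen \<rho>)" "int (u + plen \<rho>) \<le> int (len1 b0)"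
    using on by (simp_all add: on_branch_def)
  ultimately have "\<exists>z1 z2. 0 \<le> z1 \<and> z1 \<le> z2 \<and> z2 \<le> int (len2 b0) \<and>
      gaps_agree k (insert (Stop p) (insert (Start p) (M b0)))
        ((coord len1 P1 L1 a1 b0)(Start p := int u, Stop p := int (u + plen \<rho>)))
        ((coord len2 P2 L2 a2 b0)(Start p := z1, Stop p := z2))"
    using gaps_agree_extend_segment[of "M b0" k "coord len1 P1 L1 a1 b0" "coord len2 P2 L2 a2 b0"
        Src Tgt "int u" "int (u + plen \<rho>)" "Start p" "Stop p"] M
    by simp
  then obtain z1 z2 where "0 \<le> z1" "z1 \<le> z2" "z2 \<le> int (len2 b0)"
    and ext: "gaps_agree k (insert (Stop p) (insert (Start p) (M b0)))
      ((coord len1 P1 L1 a1 b0)(Start p := int u, Stop p := int (u + plen \<rho>)))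
      ((coord len2 P2 L2 a2 b0)(Start p := z1, Stop p := z2))"
    by blast
  then obtain u' m where u': "z1 = int u'" "z2 = int (u' + m)" "u' + m \<le> len2 b0"
    by (intro that[of "nat z1" "nat (z2 - z1)"]) auto
  define \<rho>' where "\<rho>' = branch_walk c len2 b0 u' m"
  have "gaps_agree k (insert (Stop p) (insert (Start p) (marks (PV - {p}) XV0 br b0)))
      ((coord len1 P1 L1 a1 b0)(Start p := int u, Stop p := int (u + plen \<rho>)))
      ((coord len2 P2 L2 a2 b0)(Start p := int u', Stop p := int (u' + plen \<rho>')))"
    using ext u' by (simp add: M_def \<rho>'_def)
  moreover have "gaps_agree k (marks PV XV0 br b) (coord len1 P1 L1 a1 b) (coord len2 P2 L2 a2 b)" for b
    by (rule gaps_agree_mono[OF gaps_agree_le[OF agree]]) (simp_all add: marks_mono XV0_sub)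
  ultimately have "gaps_agree k (marks (insert p PV) XV0 (br(p := b0)) b)
      (coord len1 (P1(p := \<rho>)) L1 (a1(p := u)) b) (coord len2 (P2(p := \<rho>')) L2 (a2(p := u')) b)" for b
    by (rule gaps_agree_upd_path[OF XV0])
  moreover have "placed c len1 (insert p PV) XV0 (br(p := b0)) (a1(p := u)) (P1(p := \<rho>)) L1"
    "placed c len2 (insert p PV) XV0 (br(p := b0)) (a2(p := u')) (P2(p := \<rho>')) L2"
    using pl on branch_walk_on_branch[where len = len2 and b = b0, OF u'(3)]
    by (auto simp: placed_def XV0_def \<rho>'_def)
  ultimately have "game_equiv c k (insert p PV) XV0 len1 (P1(p := \<rho>)) L1 len2 (P2(p := \<rho>')) L2"
    using fin by (intro game_equivI) (auto simp: XV0_def)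
  moreover have "is_path (theta c len2 :: ('a, 'i, 'd) dgraph) \<rho>'"
    using branch_walk_is_path[where len = len2 and b = b0, OF u'(3)] by (simp add: \<rho>'_def)
  ultimately show ?thesis
    unfolding XV0_def by blast
qed

lemma on_branch_single: "h \<le> len b \<Longrightarrow> on_branch c len b h (single (theta_node len b h))"
  by (simp add: on_branch_def single_def plen_def pnode_def)

lemma game_equiv_initial:
  assumes "\<forall>b. threshold k \<le> int (len1 b)" "\<forall>b. threshold k \<le> int (len2 b)"
  shows "game_equiv c k {var_s, var_t} {} len1 (st_assign 0 1) L1 len2 (st_assign 0 1) L2"
proof -
  define a where "a len p = (if p = var_t then len False else 0)" for len :: "bool \<Rightarrow> nat" and p
  have plen_st_assign: "plen (st_assign u v p) = 0" for u v p
    by (simp add: st_assign_def single_def plen_def)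
  have placed: "placed c len {var_s, var_t} {} (\<lambda>_. False) (a len) (st_assign 0 1) L"
    if "\<forall>b. threshold k \<le> int (len b)" for len L
  proof -
    have pos: "\<forall>b. 0 < len b"
      using that two_le_threshold[of k] by (metis dual_order.trans of_nat_le_0_iff not_gr0 not_numeral_le_zero)
    then have "theta_node len False 0 = 0" "theta_node len False (len False) = 1"
      by (simp_all add: theta_node_def)
    then have "on_branch c len False (a len p) (st_assign 0 1 p)" if "p \<in> {var_s, var_t}" for p
      using that on_branch_single[of 0 len False c] on_branch_single[of "len False" len False c]
      by (auto simp: a_def st_assign_def var_s_def var_t_def)
    with pos show ?thesis
      by (simp add: placed_def)
  qed
  have "gaps_agree k (marks {var_s, var_t} {} (\<lambda>_. False) b)
      (coord len1 (st_assign 0 1) L1 (a len1) b) (coord len2 (st_assign 0 1) L2 (a len2) b)" for b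
  proof (rule gaps_agree_two_values)
    fix \<mu> assume "\<mu> \<in> marks {var_s, var_t} {} (\<lambda>_. False) b"
    then show "(coord len1 (st_assign 0 1) L1 (a len1) b \<mu>, coord len2 (st_assign 0 1) L2 (a len2) b \<mu>)
        \<in> {(0, 0), (int (len1 b), int (len2 b))}"
      by (cases \<mu>) (auto simp: marks_def a_def plen_st_assign)
  qed (use assms in auto)
  then show ?thesis
    using placed assms by (intro game_equivI) auto
qed

text \<open>A path quantifier counts twice: Duplicator answers the two end points of a path one at
  a time.\<close>
fun quant_rank :: "'a fm \<Rightarrow> nat" where
  "quant_rank (Neg \<phi>) = quant_rank \<phi>"
| "quant_rank (Disj \<phi> \<psi>) = max (quant_rank \<phi>) (quant_rank \<psi>)"
| "quant_rank (ExPos x \<phi>) = Suc (quant_rank \<phi>)"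
| "quant_rank (ExPath p \<phi>) = Suc (Suc (quant_rank \<phi>))"
| "quant_rank _ = 0"

lemma game_equiv_position:
  assumes "game_equiv c k PV XV len1 P1 L1 len2 P2 L2" "x \<in> XV"
  shows "L2 x \<le> plen (P2 (snd x))" "1 \<le> L1 x \<Longrightarrow> plabel (P1 (snd x)) (L1 x) = c"
    "1 \<le> L2 x \<Longrightarrow> plabel (P2 (snd x)) (L2 x) = c"
  using assms by (auto simp: game_equiv_def placed_def on_branch_def)

lemma game_equiv_sat_WL:
  assumes "wf_WL \<phi>" "quant_rank \<phi> \<le> k" "fpathv \<phi> \<subseteq> PV" "fpv \<phi> \<subseteq> XV"
    and "game_equiv c k PV XV len1 P1 L1 len2 P2 L2"
    and "sat (theta c len1 :: ('a, 'i::infinite, 'd) dgraph) P1 L1 \<phi>"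
  shows "sat (theta c len2 :: ('a, 'i, 'd) dgraph) P2 L2 \<phi>"
  using assms
proof (induction \<phi> arbitrary: k PV XV len1 P1 L1 len2 P2 L2)
  case (Edge a x y)
  then have xy: "x \<in> XV" "y \<in> XV" "snd x = snd y" and
    sat1: "L1 y = L1 x + 1" "plabel (P1 (snd y)) (L1 y) = a"
    by auto
  then have "L2 y = L2 x + 1"
    using game_equiv_same_path(2)[OF Edge.prems(5) xy] by simp
  with Edge.prems(5) xy sat1 show ?case
    using game_equiv_position[OF Edge.prems(5) xy(2)] by simp
next
  case (Less x y)
  then show ?case
    using game_equiv_same_path(1)[OF Less.prems(5)] by auto
next
  case (EqId x y)
  then show ?case
    using game_equiv_node_eq_iff[OF EqId.prems(5)]
    by (auto simp: theta_def inj_eq[OF inj_nat_embedding])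
next
  case (EqData x y)
  then show ?case
    by (simp add: theta_def)
next
  case (Neg \<phi>)
  have "\<not> sat (theta c len1 :: ('a, 'i, 'd) dgraph) P1 L1 \<phi>"
    using Neg.prems(6) by simp
  moreover have "sat (theta c len2 :: ('a, 'i, 'd) dgraph) P2 L2 \<phi> \<Longrightarrow>
      sat (theta c len1 :: ('a, 'i, 'd) dgraph) P1 L1 \<phi>"
    using Neg.IH[OF _ _ _ _ game_equiv_sym[OF Neg.prems(5)]] Neg.prems(1-4) by simp
  ultimately show ?case
    by auto
next
  case (Disj \<phi> \<psi>)
  then show ?case
    using Disj.IH[OF _ _ _ _ Disj.prems(5)] by auto
next
  case (ExPos x \<phi>)
  obtain k' where k: "k = Suc k'" "quant_rank \<phi> \<le> k'"
    using ExPos.prems(2) by (cases k) auto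
  obtain i where i: "i \<le> plen (P1 (snd x))" "sat (theta c len1 :: ('a, 'i, 'd) dgraph) P1 (L1(x := i)) \<phi>"
    using ExPos.prems(6) by auto
  obtain j where j: "j \<le> plen (P2 (snd x))"
    and equiv: "game_equiv c k' PV (insert x XV) len1 P1 (L1(x := i)) len2 P2 (L2(x := j))"
    using game_equiv_ExPos[OF ExPos.prems(5)[unfolded k(1)] _ i(1)] ExPos.prems(3) by auto
  have "sat (theta c len2 :: ('a, 'i, 'd) dgraph) P2 (L2(x := j)) \<phi>"
    by (rule ExPos.IH[OF _ k(2) _ _ equiv i(2)]) (use ExPos.prems(1,3,4) in auto)
  with j show ?case
    by auto
next
  case (ExPath p \<phi>)
  obtain k' where k: "k = Suc (Suc k')" "quant_rank \<phi> \<le> k'"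
    using ExPath.prems(2) by (intro that[of "k - 2"]) auto
  obtain \<rho> where \<rho>: "is_path (theta c len1 :: ('a, 'i, 'd) dgraph) \<rho>"
    "sat (theta c len1 :: ('a, 'i, 'd) dgraph) (P1(p := \<rho>)) L1 \<phi>"
    using ExPath.prems(6) by auto
  obtain \<rho>' where \<rho>': "is_path (theta c len2 :: ('a, 'i, 'd) dgraph) \<rho>'"
    and equiv: "game_equiv c k' (insert p PV) {y \<in> XV. snd y \<noteq> p}
      len1 (P1(p := \<rho>)) L1 len2 (P2(p := \<rho>')) L2"
    using game_equiv_ExPath[OF ExPath.prems(5)[unfolded k(1)] \<rho>(1)] by blast
  have "sat (theta c len2 :: ('a, 'i, 'd) dgraph) (P2(p := \<rho>')) L2 \<phi>"
    by (rule ExPath.IH[OF _ k(2) _ _ equiv \<rho>(2)]) (use ExPath.prems(1,3,4) in auto)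
  with \<rho>' show ?case
    unfolding sat.simps by blast
qed

lemma WL_expressible_imp_MWL_expressible: "WL_expressible Q \<Longrightarrow> MWL_expressible Q"
  unfolding WL_expressible_def MWL_expressible_def using wf_WL_imp_wf_MWL by blast

lemma diff_len_query_not_WL_expressible:
  "\<not> WL_expressible (diff_len_query :: ('a, 'i::infinite, 'd) query)"
proof
  assume "WL_expressible (diff_len_query :: ('a, 'i, 'd) query)"
  then obtain \<phi> :: "'a fm" where wf: "wf_WL \<phi>" and expr: "expresses \<phi> (diff_len_query :: ('a, 'i, 'd) query)"
    unfolding WL_expressible_def by blast
  fix c :: 'a
  have sat_iff: "sat (theta c len :: ('a, 'i, 'd) dgraph) (st_assign 0 1) (\<lambda>_. 0) \<phi> \<longleftrightarrow> len True \<noteq> len False"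
    if "\<forall>b. 0 < len b" for len
    using expr theta_ends_in_nodes[of len c] is_dgraph_theta[of c len] diff_len_query_theta[OF that, of c] that
    unfolding expresses_def by (metis (full_types))
  define N where "N = nat (threshold (quant_rank \<phi>))"
  have N: "threshold (quant_rank \<phi>) \<le> int N" "0 < N"
    using two_le_threshold[of "quant_rank \<phi>"] by (simp_all add: N_def)
  define len1 where "len1 b = N + of_bool b" for b
  have "sat (theta c len1 :: ('a, 'i, 'd) dgraph) (st_assign 0 1) (\<lambda>_. 0) \<phi>"
    using sat_iff[of len1] N(2) by (simp add: len1_def)
  moreover have "game_equiv c (quant_rank \<phi>) {var_s, var_t} {} len1 (st_assign 0 1) (\<lambda>_. 0)
      (\<lambda>_. N) (st_assign 0 1) (\<lambda>_. 0)"
    using N(1) by (intro game_equiv_initial) (auto simp: len1_def)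
  ultimately have "sat (theta c (\<lambda>_. N) :: ('a, 'i, 'd) dgraph) (st_assign 0 1) (\<lambda>_. 0) \<phi>"
    using game_equiv_sat_WL[OF wf order_refl] expr by (auto simp: expresses_def)
  then show False
    using sat_iff[of "\<lambda>_. N"] N(2) by simp
qed

theorem mainTheorem15:
  shows "(\<forall>Q :: ('a::finite, 'i::infinite, 'd::infinite) query.
            WL_expressible Q \<longrightarrow> MWL_expressible Q)
       \<and> MWL_expressible (diff_len_query :: ('a, 'i, 'd) query)
       \<and> \<not> WL_expressible (diff_len_query :: ('a, 'i, 'd) query)"
  using WL_expressible_imp_MWL_expressible MWL_expressible_diff_len_query
    diff_len_query_not_WL_expressible by blast

end
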